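(* No deterministic online scheduler for the serial-parallel scheduling problem on $p$ processors has awake-time competitive ratio smaller than $\phi-1/p$, where $\phi=(1+\sqrt5)/2$ is the golden ratio: for every such scheduler there is a task arrival process on which its awake time is at least $(\phi-1/p)$ times the optimal offline awake time.
   Context: Serial-parallel scheduling problem: $p$ identical processors. A task arrival process is a finite set of tasks $\tau_i=(\sigma_i,\pi_i,t_i)$ with arrival time $t_i\ge0$, serial work $\sigma_i$ and parallel work $\pi_i$, $1\le\pi_i/\sigma_i\le p$. A task is performed either by its serial job (work $\sigma_i$, at most one processor at any instant) or by its parallel job (work $\pi_i$, any number of processors, rate equal to number of processors); time is continuous, allocations may be fractional via time sharing, preemption is allowed, and the choice of implementation is irrevocable once the task is started (the scheduler may delay starting a task). A task is alive from arrival until completion; awake time is the measure of the set of times at which some task is alive. An online scheduler learns about a task only at its arrival; the optimal offline schedule knows everything in advance. *)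

theory Defs
  imports "HOL-Analysis.Analysis"
begin

type_synonym task = "real \<times> real \<times> real"

definition ser :: "task \<Rightarrow> real" where "ser x = fst x"
definition par_work :: "task \<Rightarrow> real" where "par_work x = fst (snd x)"
definition arr :: "task \<Rightarrow> real" where "arr x = snd (snd x)"

definition valid_task :: "nat \<Rightarrow> task \<Rightarrow> bool" where
  "valid_task p x \<longleftrightarrow> 0 < ser x \<and> ser x \<le> par_work x \<and> par_work x \<le> real p * ser x \<and> 0 \<le> arr x"

definition instance_ok :: "nat \<Rightarrow> task list \<Rightarrow> bool" where
  "instance_ok p I \<longleftrightarrow> (\<forall>x\<in>set I. valid_task p x) \<and> sorted (map arr I)"

text \<open>A schedule: for each task index, the implementation choice (True = parallel job,
  False = serial job) and the processing rate (number of processors, possibly fractional)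
  assigned to it at each time.\<close>
type_synonym schedule = "(nat \<Rightarrow> bool) \<times> (nat \<Rightarrow> real \<Rightarrow> real)"

definition work :: "task list \<Rightarrow> (nat \<Rightarrow> bool) \<Rightarrow> nat \<Rightarrow> real" where
  "work I c i = (if c i then par_work (I ! i) else ser (I ! i))"

definition valid_schedule :: "nat \<Rightarrow> task list \<Rightarrow> schedule \<Rightarrow> bool" where
  "valid_schedule p I S \<longleftrightarrow>
     (\<forall>i < length I.
        snd S i \<in> borel_measurable borel
      \<and> (\<forall>s. 0 \<le> snd S i s)
      \<and> (\<forall>s. s < arr (I ! i) \<longrightarrow> snd S i s = 0)
      \<and> (\<not> fst S i \<longrightarrow> (\<forall>s. snd S i s \<le> 1))
      \<and> (\<exists>T. work I (fst S) i \<le> integral {arr (I ! i)..T} (snd S i)))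
   \<and> (\<forall>s. (\<Sum>i<length I. snd S i s) \<le> real p)"

definition completion :: "task list \<Rightarrow> schedule \<Rightarrow> nat \<Rightarrow> real" where
  "completion I S i =
     Inf {T. arr (I ! i) \<le> T \<and> work I (fst S) i \<le> integral {arr (I ! i)..T} (snd S i)}"

definition awake :: "task list \<Rightarrow> schedule \<Rightarrow> real" where
  "awake I S = measure lborel (\<Union>i<length I. {arr (I ! i)..<completion I S i})"

definition opt_awake :: "nat \<Rightarrow> task list \<Rightarrow> real" where
  "opt_awake p I = Inf (awake I ` {S. valid_schedule p I S})"

text \<open>A deterministic online scheduler: maps every arrival process to a valid schedule,
  such that what it does up to time t (rates, and the implementation choice of
  every task already started) depends only on the tasks arrived by time t.\<close>
definition online_scheduler :: "nat \<Rightarrow> (task list \<Rightarrow> schedule) \<Rightarrow> bool" where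
  "online_scheduler p A \<longleftrightarrow>
     (\<forall>I. instance_ok p I \<longrightarrow> valid_schedule p I (A I))
   \<and> (\<forall>I I' t. instance_ok p I \<longrightarrow> instance_ok p I' \<longrightarrow>
        takeWhile (\<lambda>x. arr x \<le> t) I = takeWhile (\<lambda>x. arr x \<le> t) I' \<longrightarrow>
        (\<forall>i < length (takeWhile (\<lambda>x. arr x \<le> t) I).
           (AE s in lborel. s \<le> t \<longrightarrow> snd (A I) i s = snd (A I') i s)
         \<and> (0 < integral {arr (I ! i)..t} (snd (A I) i) \<longrightarrow> fst (A I) i = fst (A I') i)))"

end

theory Submission
  imports Defs
begin

text \<open>
  Fix a target ratio \<open>r \<ge> 1\<close> with \<open>r (r - 1 + 1/p) < 1\<close>. The adversary first releases a probe
  task with serial work 1 and parallel work \<open>p/r\<close>, which an offline schedule finishes by time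
  \<open>1/r\<close>. If the online scheduler runs the probe serially, or starts it only after time
  \<open>1 - 1/r\<close>, the probe alone keeps it awake until time 1. Otherwise the probe's parallel job
  was started at some time \<open>\<sigma> < 1 - 1/r\<close>; shortly afterwards, at time \<open>a = \<sigma> + \<eta>\<close>, the
  adversary releases \<open>p - 1\<close> follower tasks with serial work \<open>1 - a\<close>. Offline, all tasks run
  serially side by side and are done by time 1. Online, the probe is committed to its parallel
  job, so finishing everything by time \<open>r\<close> would require processing
  \<open>p/r - p\<eta> + (p - 1)(1 - a)\<close> units of work in \<open>[a, r]\<close>, whose capacity is only \<open>p (r - a)\<close>.
  For \<open>r = \<phi> - 1/p\<close> the condition on \<open>r\<close> reduces to \<open>\<phi>\<^sup>2 = \<phi> + 1\<close>.
\<close>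

lemma bounded_measurable_integrable_on_interval:
  fixes g :: "real \<Rightarrow> real"
  assumes "g \<in> borel_measurable borel" "\<And>s. \<bar>g s\<bar> \<le> c"
  shows "g integrable_on {u..v}"
proof (rule measurable_bounded_by_integrable_imp_integrable_real[where g="\<lambda>_. c"])
  have "g \<in> borel_measurable lebesgue"
    using measurable_completion[of g lborel borel] assms(1) by simp
  then show "g \<in> borel_measurable (lebesgue_on {u..v})"
    by (rule measurable_restrict_space1)
qed (use assms(2) in auto)

lemma integral_le_const_interval:
  fixes f :: "real \<Rightarrow> real"
  assumes "f integrable_on {u..v}" "\<And>s. f s \<le> c" "u \<le> v"
  shows "integral {u..v} f \<le> c * (v - u)"
proof -
  have "integral {u..v} f \<le> integral {u..v} (\<lambda>_. c)"
    by (rule integral_le) (use assms in auto)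
  then show ?thesis
    using assms(3) by (simp add: mult.commute)
qed

lemma integral_onset:
  fixes f :: "real \<Rightarrow> real"
  assumes int: "\<And>v. f integrable_on {u..v}" and nonneg: "\<And>s. 0 \<le> f s"
    and "0 < integral {u..T} f" "0 < \<epsilon>"
  obtains \<sigma> t where "u \<le> \<sigma>" "\<sigma> < t" "t < \<sigma> + \<epsilon>"
    "integral {u..\<sigma>} f = 0" "0 < integral {u..t} f"
proof -
  define Z where "Z = {t. 0 < integral {u..t} f}"
  have mono: "integral {u..t} f \<le> integral {u..t'} f" if "t \<le> t'" for t t'
    by (rule integral_subset_le) (use that int nonneg in auto)
  have "T \<in> Z"
    using assms(3) by (simp add: Z_def)
  moreover have Z_ge: "u \<le> t" if "t \<in> Z" for t
    using that by (cases "t < u") (auto simp: Z_def)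
  ultimately obtain t where t: "t \<in> Z" "t < Inf Z + \<epsilon> / 2"
    using cInf_lessD[of Z "Inf Z + \<epsilon> / 2"] \<open>0 < \<epsilon>\<close> by auto
  define \<sigma> where "\<sigma> = max u (Inf Z - \<epsilon> / 2)"
  have "\<sigma> \<notin> Z \<or> \<sigma> = u"
    using cInf_lower[of \<sigma> Z] Z_ge \<open>0 < \<epsilon>\<close> unfolding \<sigma>_def by (force intro: bdd_belowI)
  then have zero: "integral {u..\<sigma>} f = 0"
    using integral_nonneg[OF int nonneg, of \<sigma>] by (auto simp: Z_def)
  have "\<sigma> < t"
    using mono[of t \<sigma>] t(1) zero by (force simp: Z_def)
  moreover have "t < \<sigma> + \<epsilon>"
    using t(2) by (simp add: \<sigma>_def)
  ultimately show ?thesis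
    using that[of \<sigma> t] zero t(1) by (simp add: Z_def \<sigma>_def)
qed

lemma valid_schedule_rateD:
  assumes "valid_schedule p I S" "i < length I"
  shows "snd S i \<in> borel_measurable borel" "0 \<le> snd S i s" "snd S i s \<le> real p"
    "s < arr (I ! i) \<Longrightarrow> snd S i s = 0" "\<not> fst S i \<Longrightarrow> snd S i s \<le> 1"
proof -
  show "snd S i \<in> borel_measurable borel" "0 \<le> snd S i s"
    "s < arr (I ! i) \<Longrightarrow> snd S i s = 0" "\<not> fst S i \<Longrightarrow> snd S i s \<le> 1"
    using assms unfolding valid_schedule_def by auto
  have "snd S i s \<le> (\<Sum>j<length I. snd S j s)"
    by (rule member_le_sum) (use assms in \<open>auto simp: valid_schedule_def\<close>)
  also have "\<dots> \<le> real p"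
    using assms(1) unfolding valid_schedule_def by auto
  finally show "snd S i s \<le> real p" .
qed

lemma valid_schedule_rate_integrable:
  assumes "valid_schedule p I S" "i < length I"
  shows "snd S i integrable_on {u..v}"
  by (rule bounded_measurable_integrable_on_interval[where c="real p"])
    (use valid_schedule_rateD[OF assms] in auto)

lemma valid_schedule_rate_integral_mono:
  assumes "valid_schedule p I S" "i < length I" "u' \<le> u" "v \<le> v'"
  shows "integral {u..v} (snd S i) \<le> integral {u'..v'} (snd S i)"
  by (rule integral_subset_le)
    (use assms valid_schedule_rate_integrable[OF assms(1,2)] valid_schedule_rateD(2)[OF assms(1,2)]
      in auto)

lemma valid_schedule_rate_integral_split:
  assumes "valid_schedule p I S" "i < length I" "u \<le> w" "w \<le> v"
  shows "integral {u..v} (snd S i) = integral {u..w} (snd S i) + integral {w..v} (snd S i)"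
  using Henstock_Kurzweil_Integration.integral_combine[OF assms(3,4)
      valid_schedule_rate_integrable[OF assms(1,2)]] by simp

lemma valid_schedule_sum_integrals_le:
  assumes "valid_schedule p I S" "u \<le> v"
  shows "(\<Sum>i<length I. integral {u..v} (snd S i)) \<le> real p * (v - u)"
proof -
  note int = valid_schedule_rate_integrable[OF assms(1)]
  have "(\<Sum>i<length I. integral {u..v} (snd S i)) = integral {u..v} (\<lambda>s. \<Sum>i<length I. snd S i s)"
    by (rule integral_sum[symmetric]) (use int in auto)
  also have "\<dots> \<le> real p * (v - u)"
    by (rule integral_le_const_interval)
      (use assms int in \<open>auto simp: valid_schedule_def intro: integrable_sum\<close>)
  finally show ?thesis .
qed

lemma work_pos:
  assumes "instance_ok p I" "i < length I"
  shows "0 < work I c i"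
proof -
  have "valid_task p (I ! i)"
    using assms by (auto simp: instance_ok_def)
  then show ?thesis
    by (auto simp: valid_task_def work_def)
qed

lemma completion_le:
  assumes "arr (I ! i) \<le> T" "work I (fst S) i \<le> integral {arr (I ! i)..T} (snd S i)"
  shows "completion I S i \<le> T"
  unfolding completion_def
  by (rule cInf_lower) (use assms in \<open>auto intro: bdd_belowI[where m="arr (I ! i)"]\<close>)

lemma finishing_times_nonempty:
  assumes "instance_ok p I" "valid_schedule p I S" "i < length I"
  shows "{T. arr (I ! i) \<le> T \<and> work I (fst S) i \<le> integral {arr (I ! i)..T} (snd S i)} \<noteq> {}"
proof -
  obtain T where T: "work I (fst S) i \<le> integral {arr (I ! i)..T} (snd S i)"
    using assms(2,3) unfolding valid_schedule_def by blast
  moreover have "arr (I ! i) \<le> T"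
    using T work_pos[OF assms(1,3), of "fst S"] by (cases "arr (I ! i) \<le> T") auto
  ultimately show ?thesis
    by blast
qed

lemma le_completion:
  assumes "instance_ok p I" "valid_schedule p I S" "i < length I"
    and "\<And>T. arr (I ! i) \<le> T \<Longrightarrow> work I (fst S) i \<le> integral {arr (I ! i)..T} (snd S i) \<Longrightarrow> B \<le> T"
  shows "B \<le> completion I S i"
  unfolding completion_def
  by (rule cInf_greatest) (use finishing_times_nonempty[OF assms(1-3)] assms(4) in auto)

lemma arrival_le_completion:
  assumes "instance_ok p I" "valid_schedule p I S" "i < length I"
  shows "arr (I ! i) \<le> completion I S i"
  by (rule le_completion[OF assms]) auto

lemma work_le_integral_if_completion_less:
  assumes "instance_ok p I" "valid_schedule p I S" "i < length I" "completion I S i < B"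
  shows "work I (fst S) i \<le> integral {arr (I ! i)..B} (snd S i)"
proof -
  obtain T where "arr (I ! i) \<le> T" "T < B" "work I (fst S) i \<le> integral {arr (I ! i)..T} (snd S i)"
    using cInf_lessD[OF finishing_times_nonempty[OF assms(1-3)] assms(4)[unfolded completion_def]]
    by auto
  then show ?thesis
    using valid_schedule_rate_integral_mono[OF assms(2,3), of "arr (I ! i)" "arr (I ! i)" T B] by simp
qed

lemma le_completion_after_idle:
  assumes "instance_ok p I" "valid_schedule p I S" "i < length I"
    and "\<And>s. snd S i s \<le> c" "0 < c"
    and "arr (I ! i) \<le> \<sigma>" "integral {arr (I ! i)..\<sigma>} (snd S i) = 0"
  shows "\<sigma> + work I (fst S) i / c \<le> completion I S i"
proof (rule le_completion[OF assms(1-3)])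
  fix T
  assume T: "arr (I ! i) \<le> T" "work I (fst S) i \<le> integral {arr (I ! i)..T} (snd S i)"
  have "\<sigma> \<le> T"
    using T(2) assms(7) work_pos[OF assms(1,3), of "fst S"]
      valid_schedule_rate_integral_mono[OF assms(2,3), of "arr (I ! i)" "arr (I ! i)" T \<sigma>]
    by (cases "\<sigma> \<le> T") auto
  then have "integral {arr (I ! i)..T} (snd S i) = integral {\<sigma>..T} (snd S i)"
    using valid_schedule_rate_integral_split[OF assms(2,3) assms(6)] assms(7) by simp
  also have "\<dots> \<le> c * (T - \<sigma>)"
    by (rule integral_le_const_interval)
      (use assms(4) \<open>\<sigma> \<le> T\<close> valid_schedule_rate_integrable[OF assms(2,3)] in auto)
  finally show "\<sigma> + work I (fst S) i / c \<le> T"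
    using T(2) assms(5) by (simp add: field_simps)
qed

lemma interval_le_awake:
  assumes "{u..<v} \<subseteq> (\<Union>i<length I. {arr (I ! i)..<completion I S i})" "u \<le> v"
  shows "v - u \<le> awake I S"
proof -
  have Ico: "{l..<c} \<in> fmeasurable lborel" for l c :: real
    by (cases "l \<le> c") (auto intro: fmeasurableI)
  have "measure lborel {u..<v} \<le> awake I S"
    unfolding awake_def
    by (rule measure_mono_fmeasurable[OF assms(1)]) (auto intro: fmeasurable.finite_UN Ico)
  then show ?thesis
    using assms(2) by simp
qed

lemma completion_minus_arrival_le_awake:
  assumes "instance_ok p I" "valid_schedule p I S" "i < length I"
  shows "completion I S i - arr (I ! i) \<le> awake I S"
  by (rule interval_le_awake) (use assms arrival_le_completion[OF assms] in auto)

lemma awake_le_window: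
  assumes "\<And>i. i < length I \<Longrightarrow> B0 \<le> arr (I ! i)" "\<And>i. i < length I \<Longrightarrow> completion I S i \<le> B1"
    and "B0 \<le> B1"
  shows "awake I S \<le> B1 - B0"
proof -
  have "awake I S \<le> measure lborel {B0..B1}"
    unfolding awake_def
    using fmeasurable_cbox[of B0 B1] assms(1,2)
    by (intro measure_mono_fmeasurable) (force simp: cbox_interval)+
  then show ?thesis
    using assms(3) by simp
qed

lemma opt_awake_le_awake:
  assumes "valid_schedule p I S"
  shows "opt_awake p I \<le> awake I S"
  unfolding opt_awake_def
  by (rule cInf_lower) (use assms in \<open>auto intro!: bdd_belowI[where m=0] simp: awake_def\<close>)

lemma opt_awake_nonneg:
  assumes "valid_schedule p I S"
  shows "0 \<le> opt_awake p I"
  unfolding opt_awake_def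
proof (rule cInf_greatest)
  show "awake I ` {S. valid_schedule p I S} \<noteq> {}"
    using assms by blast
qed (auto simp: awake_def)

lemma opt_awake_single_le:
  assumes "valid_task p \<tau>" "1 \<le> p"
  shows "opt_awake p [\<tau>] \<le> par_work \<tau> / real p"
proof -
  define e where "e = arr \<tau> + par_work \<tau> / real p"
  define S :: schedule where "S = (\<lambda>_. True, \<lambda>_ s. real p * indicator {arr \<tau>..e} s)"
  have "arr \<tau> \<le> e"
    using assms by (simp add: e_def valid_task_def)
  have finished: "work [\<tau>] (fst S) 0 \<le> integral {arr \<tau>..e} (snd S 0)"
  proof -
    have "integral {arr \<tau>..e} (snd S 0) = integral {arr \<tau>..e} (\<lambda>_. real p)"
      by (rule integral_cong) (simp add: S_def)
    then show ?thesis
      using assms \<open>arr \<tau> \<le> e\<close> by (simp add: S_def work_def e_def)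
  qed
  have "valid_schedule p [\<tau>] S"
    unfolding valid_schedule_def
  proof (intro conjI allI impI)
    show "\<exists>T. work [\<tau>] (fst S) i \<le> integral {arr ([\<tau>] ! i)..T} (snd S i)" if "i < length [\<tau>]" for i
      using that finished by auto
  qed (auto simp: S_def indicator_def)
  moreover have "awake [\<tau>] S \<le> e - arr \<tau>"
    by (rule awake_le_window) (use completion_le[of "[\<tau>]" 0 e S] finished \<open>arr \<tau> \<le> e\<close> in auto)
  ultimately show ?thesis
    using opt_awake_le_awake by (fastforce simp: e_def)
qed

lemma opt_awake_serial_le:
  assumes "instance_ok p I" "length I \<le> p" "B0 \<le> B1"
    and "\<And>i. i < length I \<Longrightarrow> B0 \<le> arr (I ! i)"
    and "\<And>i. i < length I \<Longrightarrow> arr (I ! i) + ser (I ! i) \<le> B1"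
  shows "opt_awake p I \<le> B1 - B0"
proof -
  define S :: schedule where
    "S = (\<lambda>_. False, \<lambda>i s. indicator {arr (I ! i)..arr (I ! i) + ser (I ! i)} s)"
  have finished: "arr (I ! i) \<le> arr (I ! i) + ser (I ! i)"
    "work I (fst S) i \<le> integral {arr (I ! i)..arr (I ! i) + ser (I ! i)} (snd S i)"
    if "i < length I" for i
  proof -
    have "0 < ser (I ! i)"
      using assms(1) that by (auto simp: instance_ok_def valid_task_def)
    moreover have "integral {arr (I ! i)..arr (I ! i) + ser (I ! i)} (snd S i)
        = integral {arr (I ! i)..arr (I ! i) + ser (I ! i)} (\<lambda>_. 1)"
      by (rule integral_cong) (simp add: S_def)
    ultimately show "arr (I ! i) \<le> arr (I ! i) + ser (I ! i)"
      "work I (fst S) i \<le> integral {arr (I ! i)..arr (I ! i) + ser (I ! i)} (snd S i)"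
      by (simp_all add: work_def S_def)
  qed
  have "(\<Sum>i<length I. snd S i s) \<le> real p" for s
  proof -
    have "(\<Sum>i<length I. snd S i s) \<le> (\<Sum>i<length I. 1)"
      by (rule sum_mono) (simp add: S_def indicator_def)
    then show ?thesis
      using assms(2) by simp
  qed
  then have "valid_schedule p I S"
    unfolding valid_schedule_def using finished(2) by (auto simp: S_def indicator_def)
  moreover have "awake I S \<le> B1 - B0"
    by (rule awake_le_window) (use assms(3-5) finished completion_le order_trans in meson)+
  ultimately show ?thesis
    using opt_awake_le_awake by fastforce
qed

lemma online_scheduler_agree_before:
  assumes "online_scheduler p A" "instance_ok p I" "instance_ok p I'"
    and "takeWhile (\<lambda>x. arr x \<le> t) I = takeWhile (\<lambda>x. arr x \<le> t) I'"
    and "i < length (takeWhile (\<lambda>x. arr x \<le> t) I)"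
  shows "integral {u..t} (snd (A I) i) = integral {u..t} (snd (A I') i)"
    and "0 < integral {arr (I ! i)..t} (snd (A I) i) \<Longrightarrow> fst (A I) i = fst (A I') i"
proof -
  have agree: "AE s in lborel. s \<le> t \<longrightarrow> snd (A I) i s = snd (A I') i s"
    and "0 < integral {arr (I ! i)..t} (snd (A I) i) \<longrightarrow> fst (A I) i = fst (A I') i"
    using assms unfolding online_scheduler_def by blast+
  then show "0 < integral {arr (I ! i)..t} (snd (A I) i) \<Longrightarrow> fst (A I) i = fst (A I') i"
    by blast
  from agree have "AE s in lborel. s \<in> {u..t} \<longrightarrow> snd (A I) i s = snd (A I') i s"
    by eventually_elim auto
  then show "integral {u..t} (snd (A I) i) = integral {u..t} (snd (A I') i)"
    unfolding integral_def integrable_on_def by (simp add: has_integral_AE)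
qed

lemma awake_ge_scaled_opt_awake:
  assumes "valid_schedule p I S" "c \<le> 1"
  shows "c * opt_awake p I \<le> awake I S"
  using mult_right_mono[OF assms(2) opt_awake_nonneg[OF assms(1)]] opt_awake_le_awake[OF assms(1)]
  by simp

definition probe_task :: "nat \<Rightarrow> real \<Rightarrow> task" where
  "probe_task p r = (1, real p / r, 0)"

definition follower_task :: "nat \<Rightarrow> real \<Rightarrow> task" where
  "follower_task p a = (1 - a, real p * (1 - a), a)"

definition probe_with_followers :: "nat \<Rightarrow> real \<Rightarrow> real \<Rightarrow> task list" where
  "probe_with_followers p r a = probe_task p r # replicate (p - 1) (follower_task p a)"

lemma probe_task_simps [simp]:
  "ser (probe_task p r) = 1" "par_work (probe_task p r) = real p / r" "arr (probe_task p r) = 0"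
  by (simp_all add: probe_task_def ser_def par_work_def arr_def)

lemma follower_task_simps [simp]:
  "ser (follower_task p a) = 1 - a" "par_work (follower_task p a) = real p * (1 - a)"
  "arr (follower_task p a) = a"
  by (simp_all add: follower_task_def ser_def par_work_def arr_def)

lemma probe_with_followers_not_Nil [simp]: "probe_with_followers p r a \<noteq> []"
  by (simp add: probe_with_followers_def)

lemma probe_with_followers_nth:
  assumes "1 \<le> p"
  shows "length (probe_with_followers p r a) = p"
    and "probe_with_followers p r a ! 0 = probe_task p r"
    and "0 < i \<Longrightarrow> i < p \<Longrightarrow> probe_with_followers p r a ! i = follower_task p a"
  using assms by (auto simp: probe_with_followers_def nth_Cons')

context
  fixes p :: nat and A :: "task list \<Rightarrow> schedule" and r :: real
  assumes p_pos: "1 \<le> p" and online: "online_scheduler p A"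
    and r_ge_1: "1 \<le> r" and r_small: "r * (r - 1 + 1 / real p) < 1"
begin

lemma instance_ok_probe: "instance_ok p [probe_task p r]"
proof -
  have "r * (1 / real p) \<le> r * (r - 1 + 1 / real p)"
    by (rule mult_left_mono) (use r_ge_1 in auto)
  then have "r \<le> real p"
    using r_small p_pos by (simp add: field_simps)
  then show ?thesis
    using r_ge_1 p_pos by (simp add: instance_ok_def valid_task_def field_simps)
qed

lemma opt_awake_probe: "r * opt_awake p [probe_task p r] \<le> 1"
proof -
  have "opt_awake p [probe_task p r] \<le> 1 / r"
    using opt_awake_single_le[of p "probe_task p r"] instance_ok_probe p_pos
    by (simp add: instance_ok_def)
  then show ?thesis
    using r_ge_1 by (simp add: field_simps)
qed

lemma instance_ok_probe_with_followers:
  assumes "0 \<le> a" "a < 1"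
  shows "instance_ok p (probe_with_followers p r a)"
proof -
  have "valid_task p (follower_task p a)"
    using assms p_pos by (simp add: valid_task_def)
  then show ?thesis
    using instance_ok_probe assms
    by (auto simp: instance_ok_def probe_with_followers_def sorted_replicate)
qed

lemma opt_awake_probe_with_followers:
  assumes "0 \<le> a" "a < 1"
  shows "opt_awake p (probe_with_followers p r a) \<le> 1"
  using opt_awake_serial_le[OF instance_ok_probe_with_followers[OF assms], of 0 1] assms
    probe_with_followers_nth[OF p_pos]
  by (force simp: nth_Cons' probe_with_followers_def)

lemma slack_exists:
  obtains \<eta> where "0 < \<eta>" "\<eta> < 1 / r - (r - 1 + 1 / real p)"
proof -
  have "0 < 1 / r - (r - 1 + 1 / real p)"
    using r_small r_ge_1 by (simp add: field_simps)
  then show ?thesis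
    using dense that by blast
qed

lemma slack_less_inverse:
  assumes "\<eta> < 1 / r - (r - 1 + 1 / real p)"
  shows "\<eta> < 1 / r"
proof -
  have "0 \<le> r - 1 + 1 / real p"
    using r_ge_1 by simp
  then show ?thesis
    using assms by linarith
qed

lemma valid_schedule_probe: "valid_schedule p [probe_task p r] (A [probe_task p r])"
  using online instance_ok_probe by (simp add: online_scheduler_def)

lemma probe_onset:
  assumes "fst (A [probe_task p r]) 0" "0 < \<eta>"
  obtains \<sigma> t where "0 \<le> \<sigma>" "\<sigma> < t" "t < \<sigma> + \<eta>"
    "integral {0..\<sigma>} (snd (A [probe_task p r]) 0) = 0"
    "0 < integral {0..t} (snd (A [probe_task p r]) 0)"
proof -
  let ?f = "snd (A [probe_task p r]) 0"
  note valid = valid_schedule_probe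
  obtain T where "real p / r \<le> integral {0..T} ?f"
    using valid assms(1) unfolding valid_schedule_def work_def by auto
  moreover have "0 < real p / r"
    using r_ge_1 p_pos by simp
  ultimately have "0 < integral {0..T} ?f"
    by linarith
  moreover have "?f integrable_on {0..v}" "0 \<le> ?f s" for v s
    by (simp_all add: valid_schedule_rate_integrable[OF valid] valid_schedule_rateD(2)[OF valid])
  ultimately show ?thesis
    using integral_onset[where u=0 and f="?f"] assms(2) that by blast
qed

lemma probe_late_or_early:
  obtains "1 \<le> completion [probe_task p r] (A [probe_task p r]) 0"
  | \<sigma> t \<eta> where "fst (A [probe_task p r]) 0"
      "0 < \<eta>" "\<eta> < 1 / r - (r - 1 + 1 / real p)"
      "0 \<le> \<sigma>" "\<sigma> < t" "t < \<sigma> + \<eta>" "\<sigma> + \<eta> < 1"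
      "integral {0..\<sigma>} (snd (A [probe_task p r]) 0) = 0"
      "0 < integral {0..t} (snd (A [probe_task p r]) 0)"
proof -
  let ?I = "[probe_task p r]"
  note idle = le_completion_after_idle[OF instance_ok_probe valid_schedule_probe, where i=0, simplified]
  show ?thesis
  proof (cases "fst (A ?I) 0")
    case False
    then have "1 \<le> completion ?I (A ?I) 0"
      using idle[of 1 0] valid_schedule_rateD(5)[OF valid_schedule_probe, of 0] by (simp add: work_def)
    then show ?thesis
      by (rule that(1))
  next
    case parallel: True
    obtain \<eta> where \<eta>: "0 < \<eta>" "\<eta> < 1 / r - (r - 1 + 1 / real p)"
      by (rule slack_exists)
    obtain \<sigma> t where onset: "0 \<le> \<sigma>" "\<sigma> < t" "t < \<sigma> + \<eta>"
      "integral {0..\<sigma>} (snd (A ?I) 0) = 0" "0 < integral {0..t} (snd (A ?I) 0)"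
      by (rule probe_onset[OF parallel \<eta>(1)])
    show ?thesis
    proof (cases "1 - 1 / r \<le> \<sigma>")
      case True
      have "\<sigma> + (real p / r) / real p \<le> completion ?I (A ?I) 0"
        using idle[of "real p" \<sigma>] valid_schedule_rateD(3)[OF valid_schedule_probe, of 0]
          onset parallel p_pos
        by (simp add: work_def)
      then show ?thesis
        using that(1) True p_pos by simp
    next
      case False
      then show ?thesis
        using that(2) onset \<eta> parallel slack_less_inverse[OF \<eta>(2)] by auto
    qed
  qed
qed

text \<open>The followers arrive at \<open>\<sigma> + \<eta> > t\<close>, so up to time \<open>t\<close> the scheduler treats the probe
  exactly as when it arrives alone.\<close>

context
  fixes \<sigma> t \<eta> :: real
  assumes probe_parallel: "fst (A [probe_task p r]) 0"
    and \<eta>_pos: "0 < \<eta>" and \<eta>_small: "\<eta> < 1 / r - (r - 1 + 1 / real p)"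
    and onset: "0 \<le> \<sigma>" "\<sigma> < t" "t < \<sigma> + \<eta>" "\<sigma> + \<eta> < 1"
    and probe_idle: "integral {0..\<sigma>} (snd (A [probe_task p r]) 0) = 0"
    and probe_started: "0 < integral {0..t} (snd (A [probe_task p r]) 0)"
begin

lemma early_instance_ok: "instance_ok p (probe_with_followers p r (\<sigma> + \<eta>))"
  by (rule instance_ok_probe_with_followers) (use onset \<eta>_pos in auto)

lemma early_valid_schedule:
  "valid_schedule p (probe_with_followers p r (\<sigma> + \<eta>)) (A (probe_with_followers p r (\<sigma> + \<eta>)))"
  using online early_instance_ok by (simp add: online_scheduler_def)

lemma early_probe_progress:
  shows "fst (A (probe_with_followers p r (\<sigma> + \<eta>))) 0"
    and "integral {0..\<sigma> + \<eta>} (snd (A (probe_with_followers p r (\<sigma> + \<eta>))) 0) \<le> real p * \<eta>"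
proof -
  let ?J = "[probe_task p r]"
  let ?I = "probe_with_followers p r (\<sigma> + \<eta>)"
  note valid = early_valid_schedule and valid0 = valid_schedule_probe
  have "takeWhile (\<lambda>x. arr x \<le> t) ?J = takeWhile (\<lambda>x. arr x \<le> t) ?I"
    using onset by (cases "p - 1") (auto simp: probe_with_followers_def)
  note agree = online_scheduler_agree_before[OF online instance_ok_probe early_instance_ok this, of 0]
  show "fst (A ?I) 0"
    using agree(2) probe_parallel probe_started onset by simp
  have "integral {0..t} (snd (A ?I) 0) = integral {0..t} (snd (A ?J) 0)"
    using agree(1) onset by simp
  also have "\<dots> = integral {\<sigma>..t} (snd (A ?J) 0)"
    using valid_schedule_rate_integral_split[OF valid0, of 0 0 \<sigma> t] onset probe_idle by simp
  also have "\<dots> \<le> real p * (t - \<sigma>)"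
    using integral_le_const_interval valid_schedule_rate_integrable[OF valid0]
      valid_schedule_rateD(3)[OF valid0] onset by simp
  finally have "integral {0..t} (snd (A ?I) 0) \<le> real p * (t - \<sigma>)" .
  moreover have "integral {t..\<sigma> + \<eta>} (snd (A ?I) 0) \<le> real p * (\<sigma> + \<eta> - t)"
    using integral_le_const_interval valid_schedule_rate_integrable[OF valid, of 0]
      valid_schedule_rateD(3)[OF valid, of 0] onset by simp
  ultimately show "integral {0..\<sigma> + \<eta>} (snd (A ?I) 0) \<le> real p * \<eta>"
    using valid_schedule_rate_integral_split[OF valid, of 0 0 t "\<sigma> + \<eta>"] onset
    by (simp add: algebra_simps)
qed

lemma early_probe_busy:
  "\<sigma> + \<eta> \<le> completion (probe_with_followers p r (\<sigma> + \<eta>)) (A (probe_with_followers p r (\<sigma> + \<eta>))) 0"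
proof -
  let ?I = "probe_with_followers p r (\<sigma> + \<eta>)"
  note nth = probe_with_followers_nth[OF p_pos, where r=r and a="\<sigma> + \<eta>"]
  have "real p * \<eta> < real p / r"
    using slack_less_inverse[OF \<eta>_small] p_pos by (simp add: divide_inverse)
  then have "integral {0..T} (snd (A ?I) 0) < work ?I (fst (A ?I)) 0" if "T < \<sigma> + \<eta>" for T
    using valid_schedule_rate_integral_mono[OF early_valid_schedule, of 0 0 0 T "\<sigma> + \<eta>"] that
      early_probe_progress nth(2)
    by (simp add: work_def)
  then show ?thesis
    using le_completion[OF early_instance_ok early_valid_schedule, of 0 "\<sigma> + \<eta>"] nth(2)
    by (force simp: not_le[symmetric])
qed

lemma early_work_within_capacity:
  assumes "\<And>i. i < p \<Longrightarrow>
    completion (probe_with_followers p r (\<sigma> + \<eta>)) (A (probe_with_followers p r (\<sigma> + \<eta>))) i < r"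
  shows "real p / r - real p * \<eta> + (real p - 1) * (1 - (\<sigma> + \<eta>)) \<le> real p * (r - (\<sigma> + \<eta>))"
proof -
  define a where "a = \<sigma> + \<eta>"
  let ?I = "probe_with_followers p r a"
  define g where "g = snd (A ?I)"
  note valid = early_valid_schedule[folded a_def]
  note nth = probe_with_followers_nth[OF p_pos, where r=r and a=a]
  have work_done: "work ?I (fst (A ?I)) i \<le> integral {arr (?I ! i)..r} (g i)" if "i < p" for i
    using work_le_integral_if_completion_less[OF early_instance_ok early_valid_schedule] assms that nth(1)
    by (simp add: a_def g_def)
  have "a \<le> r"
    using onset r_ge_1 by (simp add: a_def)
  have "real p / r \<le> integral {0..a} (g 0) + integral {a..r} (g 0)"
    using work_done[of 0] p_pos early_probe_progress(1) \<open>a \<le> r\<close> onset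
      valid_schedule_rate_integral_split[OF valid, of 0 0 a r] nth(1,2)
    by (simp add: work_def a_def g_def)
  then have probe_rest: "real p / r - real p * \<eta> \<le> integral {a..r} (g 0)"
    using early_probe_progress(2) by (simp add: a_def g_def)
  have follower_rest: "1 - a \<le> integral {a..r} (g (Suc j))" if "j < p - 1" for j
  proof -
    have "Suc j < p"
      using that by simp
    moreover have "1 - a \<le> work ?I (fst (A ?I)) (Suc j)"
      using \<open>Suc j < p\<close> nth(3)[of "Suc j"] onset p_pos
      by (auto simp: work_def a_def mult_le_cancel_right1)
    ultimately show ?thesis
      using work_done[of "Suc j"] nth(3)[of "Suc j"] by simp
  qed
  have "(\<Sum>j<p - 1. 1 - a) \<le> (\<Sum>j<p - 1. integral {a..r} (g (Suc j)))"
    by (rule sum_mono) (use follower_rest in simp)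
  then have "real p / r - real p * \<eta> + (real p - 1) * (1 - a)
      \<le> integral {a..r} (g 0) + (\<Sum>j<p - 1. integral {a..r} (g (Suc j)))"
    using probe_rest p_pos by (simp add: of_nat_diff)
  also have "\<dots> = (\<Sum>i<p. integral {a..r} (g i))"
    using sum.lessThan_Suc_shift[of "\<lambda>i. integral {a..r} (g i)" "p - 1"] p_pos by simp
  also have "\<dots> \<le> real p * (r - a)"
    using valid_schedule_sum_integrals_le[OF valid \<open>a \<le> r\<close>] nth(1) by (simp add: g_def)
  finally show ?thesis
    by (simp add: a_def)
qed

lemma early_some_task_completes_late:
  obtains i where "i < p"
    "r \<le> completion (probe_with_followers p r (\<sigma> + \<eta>)) (A (probe_with_followers p r (\<sigma> + \<eta>))) i"
proof (rule ccontr)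
  assume "\<not> thesis"
  then have "real p / r - real p * \<eta> + (real p - 1) * (1 - (\<sigma> + \<eta>)) \<le> real p * (r - (\<sigma> + \<eta>))"
    using that by (intro early_work_within_capacity) (meson not_le)
  moreover have "1 < real p * (1 / r - (r - 1) - \<eta>)"
    using mult_strict_left_mono[OF \<eta>_small, of "real p"] p_pos by (simp add: algebra_simps)
  ultimately show False
    using onset \<eta>_pos by (simp add: algebra_simps)
qed

lemma early_awake:
  "r \<le> awake (probe_with_followers p r (\<sigma> + \<eta>)) (A (probe_with_followers p r (\<sigma> + \<eta>)))"
proof -
  let ?I = "probe_with_followers p r (\<sigma> + \<eta>)"
  let ?c = "completion ?I (A ?I)"
  note nth = probe_with_followers_nth[OF p_pos, where r=r and a="\<sigma> + \<eta>"]
  obtain i where i: "i < p" "r \<le> ?c i"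
    by (rule early_some_task_completes_late)
  have "{0..<?c i} \<subseteq> (\<Union>j<length ?I. {arr (?I ! j)..<?c j})"
  proof
    fix z
    assume z: "z \<in> {0..<?c i}"
    show "z \<in> (\<Union>j<length ?I. {arr (?I ! j)..<?c j})"
    proof (cases "z < ?c 0")
      case True
      then have "z \<in> {arr (?I ! 0)..<?c 0}"
        using z nth(2) by simp
      then show ?thesis
        using nth(1) p_pos by (intro UN_I[of 0]) auto
    next
      case False
      then have "0 < i"
        using z by (cases i) auto
      then have "z \<in> {arr (?I ! i)..<?c i}"
        using z False early_probe_busy nth(3) i(1) by simp
      then show ?thesis
        using nth(1) i(1) by (intro UN_I[of i]) auto
    qed
  qed
  then have "?c i - 0 \<le> awake ?I (A ?I)"
    by (rule interval_le_awake) (use i r_ge_1 in simp)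
  then show ?thesis
    using i by simp
qed

end

lemma online_adversary: "\<exists>I. instance_ok p I \<and> I \<noteq> [] \<and> r * opt_awake p I \<le> awake I (A I)"
proof (cases rule: probe_late_or_early)
  case 1
  let ?I = "[probe_task p r]"
  have "completion ?I (A ?I) 0 - 0 \<le> awake ?I (A ?I)"
    using completion_minus_arrival_le_awake[OF instance_ok_probe valid_schedule_probe, of 0] by simp
  then show ?thesis
    using 1 opt_awake_probe instance_ok_probe by fastforce
next
  case (2 \<sigma> t \<eta>)
  let ?I = "probe_with_followers p r (\<sigma> + \<eta>)"
  have "r * opt_awake p ?I \<le> r"
    using opt_awake_probe_with_followers[of "\<sigma> + \<eta>"] mult_left_mono[of _ 1 r] 2 r_ge_1 by fastforce
  also have "r \<le> awake ?I (A ?I)"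
    by (rule early_awake[OF 2])
  finally show ?thesis
    using early_instance_ok[OF 2] probe_with_followers_not_Nil by blast
qed

end

lemma golden_ratio_minus_inverse:
  fixes p :: nat
  defines "r \<equiv> (1 + sqrt 5) / 2 - 1 / real p"
  assumes "2 \<le> p"
  shows "1 \<le> r" and "r * (r - 1 + 1 / real p) < 1"
proof -
  define \<phi> :: real where "\<phi> = (1 + sqrt 5) / 2"
  have "2 \<le> sqrt 5"
    by (rule real_le_rsqrt) simp
  then have "3 / 2 \<le> \<phi>"
    by (simp add: \<phi>_def)
  moreover have "1 / real p \<le> 1 / 2"
    using assms(2) by (simp add: field_simps)
  ultimately show "1 \<le> r"
    unfolding r_def \<phi>_def[symmetric] by linarith
  have "\<phi> * \<phi> = \<phi> + 1"
    by (simp add: \<phi>_def field_simps)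
  then have "r * (r - 1 + 1 / real p) = 1 - (\<phi> - 1) / real p"
    by (simp add: r_def \<phi>_def[symmetric] field_simps)
  moreover have "0 < (\<phi> - 1) / real p"
    using \<open>3 / 2 \<le> \<phi>\<close> assms(2) by simp
  ultimately show "r * (r - 1 + 1 / real p) < 1"
    by linarith
qed

theorem proposition8p1:
  fixes p :: nat and A :: "task list \<Rightarrow> schedule"
  assumes "1 \<le> p" and "online_scheduler p A"
  shows "\<exists>I. instance_ok p I \<and> I \<noteq> [] \<and>
           awake I (A I) \<ge> ((1 + sqrt 5) / 2 - 1 / real p) * opt_awake p I"
proof (cases "p = 1")
  case True
  define I :: "task list" where "I = [(1, 1, 0)]"
  have ok: "instance_ok p I"
    using True by (simp add: I_def instance_ok_def valid_task_def ser_def par_work_def arr_def)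
  have "sqrt 5 \<le> 3"
    by (rule real_le_lsqrt) simp_all
  then have "(1 + sqrt 5) / 2 - 1 / real p \<le> 1"
    using True by simp
  then show ?thesis
    using awake_ge_scaled_opt_awake ok assms(2) unfolding online_scheduler_def I_def by blast
next
  case False
  then have "2 \<le> p"
    using assms(1) by simp
  then show ?thesis
    using online_adversary[OF assms golden_ratio_minus_inverse[OF \<open>2 \<le> p\<close>]] by simp
qed

end
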